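(* Let $\mathcal K$ be an abstract Krivine structure and $\mathcal A_{\mathcal K\bullet}=(\mathcal P_\bullet(\Pi),\circ_\bullet,\to_\bullet,\supseteq,\mathsf k_\bullet,\mathsf s_\bullet,\Phi)$ the associated full adjunction implicative ordered combinatory algebra. Then the indexed preorders $\mathbf P_\bullet(\mathcal K)$ and $\mathbf P(\mathcal A_{\mathcal K\bullet})$ are isomorphic; namely, for every set $I$ and all $\varphi,\psi:I\to\mathcal P_\bullet(\Pi)$: there is $t\in\mathrm{QP}$ with $t\perp\varphi(i)\to_\bullet\psi(i)$ for all $i\in I$ if and only if there is $r\in\Phi$ with $r\circ_\bullet\varphi(i)\supseteq\psi(i)$ for all $i\in I$.
   Context: An abstract Krivine structure $\mathcal K$ consists of sets $\Lambda,\Pi$, a relation $\perp\subseteq\Lambda\times\Pi$ ($t\perp P$ means $t\perp\pi$ for all $\pi\in P$), a map $\mathrm{push}$ written $t\cdot\pi$ (associating to the right), an application $ts$ on $\Lambda$ (associating to the left), a subset $\mathrm{QP}\subseteq\Lambda$ closed under application, and $\mathsf K,\mathsf S\in\mathrm{QP}$ with: $t\perp s\cdot\pi\Rightarrow ts\perp\pi$; $t\perp\pi\Rightarrow\mathsf K\perp t\cdot s\cdot\pi$; $tu(su)\perp\pi\Rightarrow\mathsf S\perp t\cdot s\cdot u\cdot\pi$. Polars: $L^\perp=\{\pi:\forall t\in L,\ t\perp\pi\}$, ${}^\perp P=\{t:\forall\pi\in P,\ t\perp\pi\}$; $\overline P=({}^\perp P)^\perp$; $\widehat P=\bigcup_{\pi\in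 P}\overline{\{\pi\}}$; $\mathcal P_\bullet(\Pi)=\{P:\widehat P=P\}$. $P\to_\bullet Q=\widehat{\{t\cdot\pi:t\in{}^\perp P,\pi\in Q\}}$; $P\circ_\bullet Q=\{\pi:t\cdot\pi'\in P\ \forall t\in{}^\perp Q,\ \pi'\in\overline{\{\pi\}}\}$; $\mathsf E=\mathsf S(\mathsf K(\mathsf S\mathsf K\mathsf K))$, $\mathsf B=\mathsf S(\mathsf K\mathsf S)\mathsf K$, $\mathsf k_\bullet=\{\mathsf E\mathsf K\}^\perp$, $\mathsf s_\bullet=\{\mathsf E((\mathsf B\mathsf E)\mathsf S)\}^\perp$, $\Phi=\{P\in\mathcal P_\bullet(\Pi):\exists t\in\mathrm{QP},\ t\perp P\}$. $\mathbf P_\bullet(\mathcal K)$ is the functor $\mathbf{Set}^{op}\to\mathbf{Ord}$, $I\mapsto(\mathcal P_\bullet(\Pi)^I,\vdash)$ with $\varphi\vdash\psi$ iff $\exists t\in\mathrm{QP}\ \forall i,\ t\perp\varphi(i)\to_\bullet\psi(i)$, and $f\mapsto(\varphi\mapsto\varphi\circ f)$. For an ordered combinatory algebra $\mathcal A$ with carrier $A$, order $\le$ and filter $\Phi$, $\mathbf P(\mathcal A)$ is $I\mapsto(A^I,\vdash)$ with $\varphi\vdash\psi$ iff $\exists r\in\Phi\ \forall i,\ r\varphi(i)\le\psi(i)$, and $f\mapsto(\varphi\mapsto\varphi\circ f)$; for $\mathcal A_{\mathcal K\bullet}$, $\le$ is $\supseteq$ and application is $\circ_\bullet$. *)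

theory Defs
  imports Main
begin

text \<open>Abstract Krivine structure: terms of type 't (Lambda), stacks of type 'p (Pi).
  perp t pi is t orthogonal to pi, push t pi is t . pi, app t s is ts.\<close>

locale krivine_structure =
  fixes perp :: "'t \<Rightarrow> 'p \<Rightarrow> bool"
    and push :: "'t \<Rightarrow> 'p \<Rightarrow> 'p"
    and app :: "'t \<Rightarrow> 't \<Rightarrow> 't"
    and QP :: "'t set"
    and K :: 't and S :: 't
  assumes QP_app: "t \<in> QP \<Longrightarrow> s \<in> QP \<Longrightarrow> app t s \<in> QP"
    and K_QP: "K \<in> QP" and S_QP: "S \<in> QP"
    and perp_app: "perp t (push s \<pi>) \<Longrightarrow> perp (app t s) \<pi>"
    and perp_K: "perp t \<pi> \<Longrightarrow> perp K (push t (push s \<pi>))"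
    and perp_S: "perp (app (app t u) (app s u)) \<pi> \<Longrightarrow> perp S (push t (push s (push u \<pi>)))"

definition polL :: "('t \<Rightarrow> 'p \<Rightarrow> bool) \<Rightarrow> 't set \<Rightarrow> 'p set" where
  "polL perp L = {\<pi>. \<forall>t\<in>L. perp t \<pi>}"

definition polR :: "('t \<Rightarrow> 'p \<Rightarrow> bool) \<Rightarrow> 'p set \<Rightarrow> 't set" where
  "polR perp P = {t. \<forall>\<pi>\<in>P. perp t \<pi>}"

definition bclosure :: "('t \<Rightarrow> 'p \<Rightarrow> bool) \<Rightarrow> 'p set \<Rightarrow> 'p set" where
  "bclosure perp P = polL perp (polR perp P)"

definition bhat :: "('t \<Rightarrow> 'p \<Rightarrow> bool) \<Rightarrow> 'p set \<Rightarrow> 'p set" where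
  "bhat perp P = (\<Union>\<pi>\<in>P. bclosure perp {\<pi>})"

definition Pbul :: "('t \<Rightarrow> 'p \<Rightarrow> bool) \<Rightarrow> 'p set set" where
  "Pbul perp = {P. bhat perp P = P}"

definition arr_bul :: "('t \<Rightarrow> 'p \<Rightarrow> bool) \<Rightarrow> ('t \<Rightarrow> 'p \<Rightarrow> 'p) \<Rightarrow> 'p set \<Rightarrow> 'p set \<Rightarrow> 'p set" where
  "arr_bul perp push P Q = bhat perp {push t \<pi> | t \<pi>. t \<in> polR perp P \<and> \<pi> \<in> Q}"

definition app_bul :: "('t \<Rightarrow> 'p \<Rightarrow> bool) \<Rightarrow> ('t \<Rightarrow> 'p \<Rightarrow> 'p) \<Rightarrow> 'p set \<Rightarrow> 'p set \<Rightarrow> 'p set" where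
  "app_bul perp push P Q = {\<pi>. \<forall>t\<in>polR perp Q. \<forall>\<pi>'\<in>bclosure perp {\<pi>}. push t \<pi>' \<in> P}"

definition Phi_bul :: "('t \<Rightarrow> 'p \<Rightarrow> bool) \<Rightarrow> 't set \<Rightarrow> 'p set set" where
  "Phi_bul perp QP = {P \<in> Pbul perp. \<exists>t\<in>QP. \<forall>\<pi>\<in>P. perp t \<pi>}"

definition combE :: "('t \<Rightarrow> 't \<Rightarrow> 't) \<Rightarrow> 't \<Rightarrow> 't \<Rightarrow> 't" where
  "combE app K S = app S (app K (app (app S K) K))"
definition combB :: "('t \<Rightarrow> 't \<Rightarrow> 't) \<Rightarrow> 't \<Rightarrow> 't \<Rightarrow> 't" where
  "combB app K S = app (app S (app K S)) K"
definition k_bul :: "('t \<Rightarrow> 'p \<Rightarrow> bool) \<Rightarrow> ('t \<Rightarrow> 't \<Rightarrow> 't) \<Rightarrow> 't \<Rightarrow> 't \<Rightarrow> 'p set" where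
  "k_bul perp app K S = polL perp {app (combE app K S) K}"
definition s_bul :: "('t \<Rightarrow> 'p \<Rightarrow> bool) \<Rightarrow> ('t \<Rightarrow> 't \<Rightarrow> 't) \<Rightarrow> 't \<Rightarrow> 't \<Rightarrow> 'p set" where
  "s_bul perp app K S = polL perp {app (combE app K S) (app (app (combB app K S) (combE app K S)) S)}"

end

theory Submission
  imports Defs
begin

text \<open>Both sides say that the sets \<open>\<phi> i \<rightarrow>\<^sub>\<bullet> \<psi> i\<close> lie in a common realized set of stacks:
  on the left that set is \<open>{t}\<^sup>\<perp>\<close>, on the right it is \<open>r\<close> itself. This is because, for
  \<open>\<bullet>\<close>-closed \<open>Q\<close> and \<open>r\<close>, the two operations are adjoint: \<open>P \<rightarrow>\<^sub>\<bullet> Q \<subseteq> r\<close> iff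
  \<open>Q \<subseteq> r \<circ>\<^sub>\<bullet> P\<close>.\<close>

lemma mem_bclosure_self: "\<pi> \<in> bclosure perp {\<pi>}"
  by (auto simp: bclosure_def polL_def polR_def)

lemma subset_bhat: "X \<subseteq> bhat perp X"
  using mem_bclosure_self by (fastforce simp: bhat_def)

lemma bhat_mono: "X \<subseteq> Y \<Longrightarrow> bhat perp X \<subseteq> bhat perp Y"
  by (auto simp: bhat_def)

lemma Pbul_bclosure_closed:
  "P \<in> Pbul perp \<Longrightarrow> \<pi> \<in> P \<Longrightarrow> \<pi>' \<in> bclosure perp {\<pi>} \<Longrightarrow> \<pi>' \<in> P"
  unfolding Pbul_def bhat_def by blast

lemma bhat_least_Pbul: "X \<subseteq> P \<Longrightarrow> P \<in> Pbul perp \<Longrightarrow> bhat perp X \<subseteq> P"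
  using bhat_mono[of X P perp] by (simp add: Pbul_def)

lemma polL_in_Pbul: "polL perp L \<in> Pbul perp"
proof -
  have "bhat perp (polL perp L) \<subseteq> polL perp L"
    by (auto simp: bhat_def bclosure_def polL_def polR_def)
  then show ?thesis
    using subset_bhat[of "polL perp L" perp] by (simp add: Pbul_def)
qed

lemma polL_singleton_in_Phi_bul: "t \<in> QP \<Longrightarrow> polL perp {t} \<in> Phi_bul perp QP"
  using polL_in_Pbul[of perp "{t}"] by (auto simp: Phi_bul_def polL_def)

lemma subset_polL_singleton_iff: "X \<subseteq> polL perp {t} \<longleftrightarrow> (\<forall>\<pi>\<in>X. perp t \<pi>)"
  by (auto simp: polL_def)

lemma arr_bul_subset_iff_subset_app_bul:
  assumes "Q \<in> Pbul perp" and "r \<in> Pbul perp"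
  shows "arr_bul perp push P Q \<subseteq> r \<longleftrightarrow> Q \<subseteq> app_bul perp push r P"
proof
  assume arr: "arr_bul perp push P Q \<subseteq> r"
  show "Q \<subseteq> app_bul perp push r P"
  proof (intro subsetI, unfold app_bul_def, intro CollectI ballI)
    fix \<pi> t \<pi>' assume "\<pi> \<in> Q" "t \<in> polR perp P" "\<pi>' \<in> bclosure perp {\<pi>}"
    then have "push t \<pi>' \<in> {push t \<pi> | t \<pi>. t \<in> polR perp P \<and> \<pi> \<in> Q}"
      using Pbul_bclosure_closed[OF assms(1)] by blast
    then have "push t \<pi>' \<in> arr_bul perp push P Q"
      unfolding arr_bul_def by (rule subsetD[OF subset_bhat])
    with arr show "push t \<pi>' \<in> r" ..
  qed
next
  assume app: "Q \<subseteq> app_bul perp push r P"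
  have "{push t \<pi> | t \<pi>. t \<in> polR perp P \<and> \<pi> \<in> Q} \<subseteq> r"
  proof (intro subsetI, elim CollectE exE conjE)
    fix x t \<pi> assume "x = push t \<pi>" "t \<in> polR perp P" "\<pi> \<in> Q"
    with app show "x \<in> r"
      using mem_bclosure_self[of \<pi> perp] unfolding app_bul_def by auto
  qed
  then show "arr_bul perp push P Q \<subseteq> r"
    unfolding arr_bul_def using assms(2) by (rule bhat_least_Pbul)
qed

theorem mainTheorem16:
  fixes perp :: "'t \<Rightarrow> 'p \<Rightarrow> bool" and push :: "'t \<Rightarrow> 'p \<Rightarrow> 'p"
    and app :: "'t \<Rightarrow> 't \<Rightarrow> 't" and QP :: "'t set" and K S :: 't
    and I :: "'i set" and \<phi> \<psi> :: "'i \<Rightarrow> 'p set"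
  assumes "krivine_structure perp push app QP K S"
    and "\<forall>i\<in>I. \<phi> i \<in> Pbul perp"
    and \<psi>: "\<forall>i\<in>I. \<psi> i \<in> Pbul perp"
  shows "(\<exists>t\<in>QP. \<forall>i\<in>I. \<forall>\<pi>\<in>arr_bul perp push (\<phi> i) (\<psi> i). perp t \<pi>)
     \<longleftrightarrow> (\<exists>r\<in>Phi_bul perp QP. \<forall>i\<in>I. \<psi> i \<subseteq> app_bul perp push r (\<phi> i))"
proof
  assume "\<exists>t\<in>QP. \<forall>i\<in>I. \<forall>\<pi>\<in>arr_bul perp push (\<phi> i) (\<psi> i). perp t \<pi>"
  then obtain t where t: "t \<in> QP"
    and arr: "\<And>i. i \<in> I \<Longrightarrow> arr_bul perp push (\<phi> i) (\<psi> i) \<subseteq> polL perp {t}"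
    unfolding subset_polL_singleton_iff by blast
  have "\<psi> i \<subseteq> app_bul perp push (polL perp {t}) (\<phi> i)" if "i \<in> I" for i
    using arr_bul_subset_iff_subset_app_bul[OF _ polL_in_Pbul] \<psi> arr that by blast
  with polL_singleton_in_Phi_bul[OF t]
  show "\<exists>r\<in>Phi_bul perp QP. \<forall>i\<in>I. \<psi> i \<subseteq> app_bul perp push r (\<phi> i)" by blast
next
  assume "\<exists>r\<in>Phi_bul perp QP. \<forall>i\<in>I. \<psi> i \<subseteq> app_bul perp push r (\<phi> i)"
  then obtain r t where r: "r \<in> Pbul perp" and t: "t \<in> QP" and rt: "r \<subseteq> polL perp {t}"
    and app: "\<And>i. i \<in> I \<Longrightarrow> \<psi> i \<subseteq> app_bul perp push r (\<phi> i)"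
    unfolding Phi_bul_def subset_polL_singleton_iff by blast
  have "arr_bul perp push (\<phi> i) (\<psi> i) \<subseteq> polL perp {t}" if "i \<in> I" for i
    using arr_bul_subset_iff_subset_app_bul[OF _ r] \<psi> app rt that by blast
  with t show "\<exists>t\<in>QP. \<forall>i\<in>I. \<forall>\<pi>\<in>arr_bul perp push (\<phi> i) (\<psi> i). perp t \<pi>"
    unfolding subset_polL_singleton_iff by blast
qed

end
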